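(* Let $0<q<1$, $s\ge1$, $\alpha\in\mathbb{R}\setminus\mathbb{Z}_-$. For $j=1,\dots,s-1$ let $a_j>0$, $c_j>0$ be real and $b_j,d_j\in\mathbb{C}$ with $a_jn+\mathrm{Re}(b_j)\notin\mathbb{Z}_-$ and $c_jn+\mathrm{Re}(d_j)\notin\mathbb{Z}_-$ for all positive integers $n$ (for $s=1$ there are no such parameters). Then, uniformly on compact subsets of $\mathbb{C}$, $$\lim_{n\to+\infty}{}_s\phi_s\!\left(\begin{array}{c}q^{-n},q^{a_1n+b_1},\dots,q^{a_{s-1}n+b_{s-1}}\\ q^{\alpha},q^{c_1n+d_1},\dots,q^{c_{s-1}n+d_{s-1}}\end{array};q,q^nz\right)={}_0\phi_1\!\left(\begin{array}{c}-\\ q^{\alpha}\end{array};q,z\right)=\left(\frac{-z}{(q-1)^2q^{\alpha}}\right)^{\frac{1-\alpha}{2}}\Gamma_q(\alpha)\,J^{(2)}_{\alpha-1}\!\left(2\sqrt{\frac{-z}{q^{\alpha}}};q\right),$$ where in the last expression powers and square roots are taken with principal branches and the expression is understood as the entire function given by the ${}_0\phi_1$.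
   Context: $\mathbb{Z}_-=\{0,-1,-2,\dots\}$. For $w\in\mathbb{C}$, $q^{w}:=e^{w\ln q}$. For $a\in\mathbb{C}$: $(a;q)_0=1$, $(a;q)_k=\prod_{j=0}^{k-1}(1-aq^{j})$, $(a;q)_\infty=\prod_{j\ge0}(1-aq^{j})$, and $(a_1,\dots,a_r;q)_k=\prod_{i=1}^r(a_i;q)_k$. The basic hypergeometric series is $${}_r\phi_s\!\left(\begin{array}{c}a_1,\dots,a_r\\ b_1,\dots,b_s\end{array};q,z\right)=\sum_{k=0}^{\infty}\frac{(a_1,\dots,a_r;q)_k}{(b_1,\dots,b_s;q)_k}(-1)^{(1+s-r)k}q^{(1+s-r)\binom{k}{2}}\frac{z^k}{(q;q)_k};$$ "$-$" denotes an empty parameter list. The $q$-Gamma function is $\Gamma_q(z)=\dfrac{(q;q)_\infty}{(q^{z};q)_\infty}(1-q)^{1-z}$. The $q$-Bessel function is $J^{(2)}_{\nu}(x;q)=\dfrac{(q^{\nu+1};q)_\infty}{(q;q)_\infty}\left(\dfrac{x}{2}\right)^{\nu}{}_0\phi_1\!\left(\begin{array}{c}-\\ q^{\nu+1}\end{array};q,-\dfrac{q^{\nu+1}x^2}{4}\right)$. *)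

theory Defs
  imports "HOL-Analysis.Analysis"
begin

definition rpowc :: "real \<Rightarrow> complex \<Rightarrow> complex" where
  "rpowc b w = exp (w * of_real (ln b))"

definition qpoch :: "complex \<Rightarrow> real \<Rightarrow> nat \<Rightarrow> complex" where
  "qpoch a q k = (\<Prod>j<k. 1 - a * of_real (q ^ j))"

definition qpoch_inf :: "complex \<Rightarrow> real \<Rightarrow> complex" where
  "qpoch_inf a q = prodinf (\<lambda>j. 1 - a * of_real (q ^ j))"

definition qhyp :: "complex list \<Rightarrow> complex list \<Rightarrow> real \<Rightarrow> complex \<Rightarrow> complex" where
  "qhyp as bs q z =
     (let e = 1 + int (length bs) - int (length as) in
      (\<Sum>k. prod_list (map (\<lambda>a. qpoch a q k) as) / prod_list (map (\<lambda>b. qpoch b q k) bs)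
            * ((-1) powi (e * int k)) * of_real (q powr (real_of_int e * real (k choose 2)))
            * z ^ k / qpoch (of_real q) q k))"

definition qGamma :: "real \<Rightarrow> complex \<Rightarrow> complex" where
  "qGamma q w = qpoch_inf (of_real q) q / qpoch_inf (rpowc q w) q * rpowc (1 - q) (1 - w)"

definition qBessel2 :: "real \<Rightarrow> complex \<Rightarrow> complex \<Rightarrow> complex" where
  "qBessel2 q \<nu> x = qpoch_inf (rpowc q (\<nu> + 1)) q / qpoch_inf (of_real q) q * (x / 2) powr \<nu>
     * qhyp [] [rpowc q (\<nu> + 1)] q (- rpowc q (\<nu> + 1) * x\<^sup>2 / 4)"

end

theory Submission
  imports Defs
begin

(* After z is replaced by q^n z, the numerator parameter q^-n contributes to the k-th term the
   factor (q^-n;q)_k (-1)^k q^(k choose 2) q^(nk) = prod_(j<k) (q^(2j) - q^(n+j)), which tends to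
   q^(2 (k choose 2)), the corresponding factor of the 0phi1 series, and is dominated by it.
   The other parameters q^(a_j n + b_j), q^(c_j n + d_j) tend to 0, so their q-shifted factorials
   tend to 1 and their quotient is bounded uniformly in k for large n.  Since the 0phi1
   coefficients decay like q^(k^2), Tannery's theorem gives uniform convergence on bounded sets.
   The Bessel form is a rearrangement of the definitions of Gamma_q and J^(2): with
   x = 2 sqrt(-z/q^alpha) the powers cancel because Ln (csqrt w) = Ln w / 2 for the principal
   branches. *)

lemma uniform_limit_power_series_tannery:
  fixes A :: "nat \<Rightarrow> nat \<Rightarrow> 'a::{real_normed_div_algebra,banach}" and M :: "nat \<Rightarrow> real"
  assumes lim: "\<And>k. (\<lambda>n. A n k) \<longlonglongrightarrow> B k"
    and bound: "eventually (\<lambda>n. \<forall>k. norm (A n k) \<le> M k) sequentially"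
    and summable_M: "\<And>R. summable (\<lambda>k. M k * R ^ k)"
    and "compact K"
  shows "uniform_limit K (\<lambda>n z. \<Sum>k. A n k * z ^ k) (\<lambda>z. \<Sum>k. B k * z ^ k) sequentially"
proof -
  obtain R where "R > 0" and R: "\<And>z. z \<in> K \<Longrightarrow> norm z \<le> R"
    using compact_imp_bounded[OF \<open>compact K\<close>] unfolding bounded_pos by auto
  have B_le: "norm (B k) \<le> M k" for k
    using bound by (intro tendsto_upperbound[OF tendsto_norm[OF lim]]) (auto elim: eventually_mono)
  have summable_2M: "summable (\<lambda>k. 2 * (M k * R ^ k))"
    by (intro summable_mult summable_M)
  have diff_le: "norm (A n k - B k) * R ^ k \<le> 2 * (M k * R ^ k)" if "\<forall>k. norm (A n k) \<le> M k" for n k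
  proof -
    have "norm (A n k - B k) \<le> 2 * M k"
      using norm_triangle_ineq4[of "A n k" "B k"] spec[OF that, of k] B_le[of k] by linarith
    then show ?thesis
      using \<open>R > 0\<close> by (simp add: mult_right_mono)
  qed
  have "((\<lambda>n. \<Sum>k. norm (A n k - B k) * R ^ k) \<longlongrightarrow> (\<Sum>k. 0)) sequentially"
  proof (rule tannerys_theorem[where M = "\<lambda>k. 2 * (M k * R ^ k)", THEN conjunct2, THEN conjunct2])
    show "(\<lambda>n. norm (A n k - B k) * R ^ k) \<longlonglongrightarrow> 0" for k
      using tendsto_mult_right[where c = "R ^ k", OF tendsto_norm[OF Lim_null[THEN iffD1, OF lim]]]
      by simp
    show "\<forall>\<^sub>F (k, n) in at_top \<times>\<^sub>F sequentially. norm (norm (A n k - B k) * R ^ k) \<le> 2 * (M k * R ^ k)"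
      using eventually_prodI[OF always_eventually[of "\<lambda>_. True"] bound]
      by (rule eventually_mono) (use diff_le \<open>R > 0\<close> in auto)
  qed (use summable_2M in simp_all)
  then have D_tendsto: "(\<lambda>n. \<Sum>k. norm (A n k - B k) * R ^ k) \<longlonglongrightarrow> 0"
    by simp
  have "norm ((\<Sum>k. A n k * z ^ k) - (\<Sum>k. B k * z ^ k)) \<le> (\<Sum>k. norm (A n k - B k) * R ^ k)"
    if n: "\<forall>k. norm (A n k) \<le> M k" and z: "norm z \<le> R" for n z
  proof -
    have term_le: "norm ((A n k - B k) * z ^ k) \<le> norm (A n k - B k) * R ^ k" for k
      using z by (auto simp: norm_mult norm_power intro!: mult_left_mono power_mono)
    have summable_bound: "summable (\<lambda>k. norm (A n k - B k) * R ^ k)"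
      using summable_2M
      by (rule summable_comparison_test') (use diff_le[OF n] \<open>R > 0\<close> in simp)
    then have summable_diff: "summable (\<lambda>k. norm ((A n k - B k) * z ^ k))"
      by (rule summable_comparison_test') (use term_le in simp)
    have "norm (B k) * norm z ^ k \<le> M k * R ^ k" for k
      using B_le[of k] z by (intro mult_mono power_mono) (auto intro: order_trans[OF norm_ge_zero])
    then have "norm (B k * z ^ k) \<le> M k * R ^ k" for k
      by (simp add: norm_mult norm_power)
    then have "summable (\<lambda>k. B k * z ^ k)"
      by (intro summable_comparison_test'[OF summable_M[of R]])
    moreover from summable_add[OF summable_norm_cancel[OF summable_diff] this]
    have "summable (\<lambda>k. A n k * z ^ k)"
      by (simp add: algebra_simps)
    ultimately have "(\<Sum>k. A n k * z ^ k) - (\<Sum>k. B k * z ^ k) = (\<Sum>k. (A n k - B k) * z ^ k)"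
      by (simp add: suminf_diff algebra_simps)
    also have "norm \<dots> \<le> (\<Sum>k. norm (A n k - B k) * R ^ k)"
      using summable_diff summable_bound term_le
      by (intro summable_norm[THEN order_trans] suminf_le) auto
    finally show ?thesis .
  qed
  with bound have dist_le: "eventually (\<lambda>n. \<forall>z\<in>K. dist (\<Sum>k. A n k * z ^ k) (\<Sum>k. B k * z ^ k)
                     \<le> (\<Sum>k. norm (A n k - B k) * R ^ k)) sequentially"
    by (auto simp: dist_norm R elim!: eventually_mono)
  show ?thesis
  proof (rule uniform_limitI)
    fix e :: real assume "e > 0"
    from dist_le order_tendstoD(2)[OF D_tendsto this]
    show "\<forall>\<^sub>F n in sequentially. \<forall>z\<in>K. dist (\<Sum>k. A n k * z ^ k) (\<Sum>k. B k * z ^ k) < e"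
      by eventually_elim force
  qed
qed

lemma rpowc_of_real: "0 < q \<Longrightarrow> rpowc q (of_real x) = of_real (q powr x)"
  unfolding rpowc_def powr_def by (simp flip: of_real_mult exp_of_real)

lemma norm_rpowc: "0 < q \<Longrightarrow> norm (rpowc q w) = q powr Re w"
  unfolding rpowc_def powr_def by (simp add: norm_exp_eq_Re)

lemma rpowc_nonzero [simp]: "rpowc q w \<noteq> 0"
  by (simp add: rpowc_def)

lemma rpowc_linear_tendsto_zero:
  assumes "0 < q" "q < 1" "0 < a"
  shows "(\<lambda>n. rpowc q (of_real (a * real n) + b)) \<longlonglongrightarrow> 0"
proof -
  have "q powr a < 1"
    using assms powr_less_mono2[of a q 1] by simp
  then have "(\<lambda>n. q powr Re b * (q powr a) ^ n) \<longlonglongrightarrow> q powr Re b * 0"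
    using assms by (intro tendsto_intros LIMSEQ_power_zero) auto
  moreover have "norm (rpowc q (of_real (a * real n) + b)) = q powr Re b * (q powr a) ^ n" for n
    using assms by (simp add: norm_rpowc powr_add powr_powr[symmetric] powr_realpow mult.commute)
  ultimately have "(\<lambda>n. norm (rpowc q (of_real (a * real n) + b))) \<longlonglongrightarrow> 0"
    by (simp only: mult_zero_right)
  then show ?thesis
    by (simp only: tendsto_norm_zero_iff)
qed

lemma norm_rpowc_linear_le:
  assumes "0 < q" "q < 1" "0 < a"
  shows "norm (rpowc q (of_real (a * real n) + b)) \<le> q powr Re b"
  using assms by (simp add: norm_rpowc powr_mono')

lemma qpoch_Suc: "qpoch x q (Suc k) = qpoch x q k * (1 - x * of_real (q ^ k))"
  by (simp add: qpoch_def)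

lemma qpoch_tendsto_one:
  assumes "f \<longlonglongrightarrow> 0"
  shows "(\<lambda>n. qpoch (f n) q k) \<longlonglongrightarrow> 1"
proof -
  have "(\<lambda>n. qpoch (f n) q k) \<longlonglongrightarrow> (\<Prod>i<k. 1 - 0 * of_real (q ^ i))"
    unfolding qpoch_def by (intro tendsto_intros assms)
  then show ?thesis by simp
qed

lemma sum_power_le_geometric: "0 \<le> q \<Longrightarrow> q < (1::real) \<Longrightarrow> (\<Sum>i<k. q ^ i) \<le> 1 / (1 - q)"
  using sum_le_suminf[OF summable_geometric[of q], of "{..<k}"] suminf_geometric[of q] by auto

lemma norm_qpoch_le:
  assumes "0 \<le> q" "q < 1"
  shows "norm (qpoch x q k) \<le> exp (norm x / (1 - q))"
proof -
  have "norm (qpoch x q k) \<le> (\<Prod>i<k. exp (norm x * q ^ i))"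
    unfolding qpoch_def
  proof (intro norm_prod_le[THEN order_trans] prod_mono conjI)
    fix i
    have "norm (1 - x * of_real (q ^ i)) \<le> 1 + norm x * q ^ i"
      using norm_triangle_ineq4[of 1 "x * of_real (q ^ i)"] assms by (simp add: norm_mult norm_power)
    also have "\<dots> \<le> exp (norm x * q ^ i)"
      by (rule exp_ge_add_one_self[THEN order.trans]) simp
    finally show "norm (1 - x * of_real (q ^ i)) \<le> exp (norm x * q ^ i)" .
  qed simp
  also have "\<dots> = exp (norm x * (\<Sum>i<k. q ^ i))"
    by (simp add: exp_sum sum_distrib_left)
  also have "\<dots> \<le> exp (norm x / (1 - q))"
    using mult_left_mono[OF sum_power_le_geometric[OF assms, of k], of "norm x"] by simp
  finally show ?thesis .
qed

lemma norm_qpoch_ge: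
  assumes "0 \<le> q" "q < 1" and x: "norm x \<le> (1 - q) / 2"
  shows "norm (qpoch x q k) \<ge> 1 / 2"
proof -
  have x_q_le: "norm x * q ^ i \<in> {0..1}" for i
    using mult_mono[of "norm x" "1/2" "q ^ i" 1] x assms by (auto simp: power_le_one)
  have "norm x * (\<Sum>i<k. q ^ i) \<le> norm x * (1 / (1 - q))"
    using sum_power_le_geometric[OF assms(1,2)] by (rule mult_left_mono) simp
  also have "\<dots> \<le> 1 / 2"
    using x assms by (simp add: field_simps)
  finally have "1 / 2 \<le> 1 - norm x * (\<Sum>i<k. q ^ i)"
    by simp
  also have "\<dots> \<le> (\<Prod>i<k. 1 - norm x * q ^ i)"
    using Weierstrass_prod_ineq[of "{..<k}" "\<lambda>i. norm x * q ^ i"] x_q_le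
    by (simp add: sum_distrib_left[symmetric])
  also have "\<dots> \<le> (\<Prod>i<k. norm (1 - x * of_real (q ^ i)))"
  proof (intro prod_mono conjI)
    fix i
    show "0 \<le> 1 - norm x * q ^ i" using x_q_le[of i] by auto
    show "1 - norm x * q ^ i \<le> norm (1 - x * of_real (q ^ i))"
      using norm_triangle_ineq2[of 1 "x * of_real (q ^ i)"] assms by (simp add: norm_mult norm_power)
  qed
  also have "\<dots> = norm (qpoch x q k)"
    unfolding qpoch_def by (rule prod_norm)
  finally show ?thesis .
qed

lemma qpoch_inf_nonzero:
  assumes "\<bar>q\<bar> < 1" and "\<And>j. x * of_real (q ^ j) \<noteq> 1"
  shows "qpoch_inf x q \<noteq> 0"
proof -
  have "summable (\<lambda>j. norm (- (x * of_real (q ^ j))))"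
    using assms(1) by (simp add: norm_mult norm_power summable_mult summable_geometric)
  then have "convergent_prod (\<lambda>j. 1 + - (x * of_real (q ^ j)))"
    by (rule summable_imp_convergent_prod_complex) (use assms(2) in auto)
  then show ?thesis
    unfolding qpoch_inf_def using assms(2) by (intro prodinf_nonzero) (auto simp: right_minus_eq)
qed

lemma qpoch_inf_rpowc_nonzero:
  assumes "0 < q" "q < 1" and \<alpha>: "\<alpha> \<notin> \<int>\<^sub>\<le>\<^sub>0"
  shows "qpoch_inf (rpowc q (of_real \<alpha>)) q \<noteq> 0"
proof (rule qpoch_inf_nonzero)
  show "\<bar>q\<bar> < 1" using assms by simp
  fix j
  show "rpowc q (of_real \<alpha>) * of_real (q ^ j) \<noteq> 1"
  proof
    assume "rpowc q (of_real \<alpha>) * of_real (q ^ j) = 1"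
    then have "q powr \<alpha> * q ^ j = 1"
      using assms by (simp add: rpowc_of_real) (metis of_real_eq_1_iff of_real_mult of_real_power)
    then have "q powr (\<alpha> + real j) = q powr 0"
      using assms by (simp add: powr_add powr_realpow)
    then have "\<alpha> = - real j"
      using assms by (simp add: powr_inj)
    with \<alpha> show False
      by (simp add: minus_of_nat_in_nonpos_Ints)
  qed
qed

lemma qhyp_0phi1_eq_qBessel2:
  fixes q \<alpha> :: real and z :: complex
  assumes q: "0 < q" "q < 1" and \<alpha>: "\<alpha> \<notin> \<int>\<^sub>\<le>\<^sub>0" and "z \<noteq> 0"
  shows "qhyp [] [rpowc q (of_real \<alpha>)] q z =
             ((- z) / (of_real ((q - 1)\<^sup>2) * rpowc q (of_real \<alpha>))) powr (of_real ((1 - \<alpha>) / 2))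
             * qGamma q (of_real \<alpha>)
             * qBessel2 q (of_real (\<alpha> - 1)) (2 * csqrt (- z / rpowc q (of_real \<alpha>)))"
proof -
  define Q where "Q = rpowc q (of_real \<alpha>)"
  define w where "w = - z / Q"
  have "w \<noteq> 0"
    using \<open>z \<noteq> 0\<close> by (simp add: w_def Q_def)
  have Q_shift: "rpowc q (of_real (\<alpha> - 1) + 1) = Q"
    by (simp add: Q_def)
  have Bessel_arg: "- Q * (2 * csqrt w)\<^sup>2 / 4 = z"
    by (simp add: power_mult_distrib w_def Q_def)
  have prefactor_arg: "(- z) / (of_real ((q - 1)\<^sup>2) * Q) = w / of_real ((q - 1)\<^sup>2)"
    by (simp add: w_def)
  have "rpowc q 1 = of_real q"
    using rpowc_of_real[OF q(1), of 1] q by simp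
  then have "qpoch_inf (of_real q) q \<noteq> 0"
    using qpoch_inf_rpowc_nonzero[OF q, of 1] by simp
  moreover have "qpoch_inf Q q \<noteq> 0"
    unfolding Q_def using q \<alpha> by (rule qpoch_inf_rpowc_nonzero)
  moreover have "(w / of_real ((q - 1)\<^sup>2)) powr (of_real ((1 - \<alpha>) / 2)) * rpowc (1 - q) (1 - of_real \<alpha>)
           * (2 * csqrt w / 2) powr (of_real (\<alpha> - 1)) = 1"
  proof -
    have Ln_csqrt: "Ln (csqrt w) = Ln w / 2"
      using \<open>w \<noteq> 0\<close> mpi_less_Im_Ln[of w] Im_Ln_le_pi[of w] by (simp add: csqrt_exp_Ln)
    have "ln ((q - 1)\<^sup>2) = 2 * ln (1 - q)"
      using q ln_realpow[of "1 - q" 2] by (simp add: power2_commute)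
    then have Ln_div: "Ln (w / of_real ((q - 1)\<^sup>2)) = Ln w - of_real (2 * ln (1 - q))"
      using Ln_divide_of_real[of "(q - 1)\<^sup>2" w] q \<open>w \<noteq> 0\<close> by simp
    show ?thesis
      using \<open>w \<noteq> 0\<close> q unfolding powr_def rpowc_def Ln_div
      by (simp add: Ln_csqrt flip: exp_add) (simp add: field_simps)
  qed
  ultimately show ?thesis
    unfolding qGamma_def qBessel2_def Q_shift Bessel_arg prefactor_arg
      Q_def[symmetric] w_def[symmetric]
    by (simp add: field_simps)
qed

lemma powr_choose2_Suc:
  "0 < q \<Longrightarrow> q powr real (Suc k choose 2) = q powr real (k choose 2) * q ^ k"
  by (simp add: numeral_2_eq_2 powr_add powr_realpow)

lemma powr_two_choose2: "0 < q \<Longrightarrow> q powr (2 * real (k choose 2)) = (\<Prod>j<k. q ^ j * q ^ j)"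
proof (induction k)
  case 0
  then show ?case by (simp add: binomial_eq_0)
next
  case (Suc k)
  have exponent: "2 * real (Suc k choose 2) = 2 * real (k choose 2) + real (k + k)"
    by (simp add: numeral_2_eq_2)
  have "q powr (2 * real (Suc k choose 2)) = q powr (2 * real (k choose 2)) * (q ^ k * q ^ k)"
    unfolding exponent powr_add powr_realpow[OF Suc.prems] by (simp add: power_add)
  then show ?case
    using Suc by simp
qed

lemma qpoch_rpowc_neg_nat_rescaled:
  assumes "0 < q"
  shows "qpoch (rpowc q (- of_nat n)) q k * (-1) ^ k * of_real (q powr real (k choose 2))
           * of_real (q ^ n) ^ k
         = of_real (\<Prod>j<k. q ^ j * q ^ j - q ^ n * q ^ j)"
proof (induction k)
  case 0
  then show ?case using assms by (simp add: qpoch_def binomial_eq_0)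
next
  case (Suc k)
  have "rpowc q (- of_nat n) = of_real (inverse (q ^ n))"
    using rpowc_of_real[OF assms, of "- real n"] assms by (simp add: powr_minus powr_realpow)
  then have "qpoch (rpowc q (- of_nat n)) q (Suc k) * (-1) ^ Suc k
        * of_real (q powr real (Suc k choose 2)) * of_real (q ^ n) ^ Suc k
      = (qpoch (rpowc q (- of_nat n)) q k * (-1) ^ k * of_real (q powr real (k choose 2))
          * of_real (q ^ n) ^ k) * of_real ((1 - inverse (q ^ n) * q ^ k) * (- (q ^ k * q ^ n)))"
    by (simp add: qpoch_Suc powr_choose2_Suc[OF assms] mult_ac)
  also have "(1 - inverse (q ^ n) * q ^ k) * (- (q ^ k * q ^ n)) = q ^ k * q ^ k - q ^ n * q ^ k"
    using assms by (simp add: field_simps)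
  finally show ?case
    using Suc by simp
qed

lemma abs_prod_qpow_diff_le:
  fixes q :: real
  assumes "0 < q" "q < 1"
  shows "\<bar>\<Prod>j<k. q ^ j * q ^ j - q ^ n * q ^ j\<bar> \<le> (\<Prod>j<k. q ^ j * q ^ j)"
proof (cases "n < k")
  case True
  then have vanishes: "(\<Prod>j<k. q ^ j * q ^ j - q ^ n * q ^ j) = 0"
    by (intro prod_zero) auto
  have "0 \<le> (\<Prod>j<k. q ^ j * q ^ j)"
    using assms by (intro prod_nonneg) auto
  then show ?thesis
    unfolding vanishes by simp
next
  case False
  then have factor_bounds: "0 \<le> q ^ j * q ^ j - q ^ n * q ^ j \<and> q ^ j * q ^ j - q ^ n * q ^ j \<le> q ^ j * q ^ j"
    if "j < k" for j
    using assms that power_decreasing[of j n q] by (auto intro!: mult_right_mono)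
  then have "0 \<le> (\<Prod>j<k. q ^ j * q ^ j - q ^ n * q ^ j)"
    by (intro prod_nonneg) auto
  moreover have "(\<Prod>j<k. q ^ j * q ^ j - q ^ n * q ^ j) \<le> (\<Prod>j<k. q ^ j * q ^ j)"
    using factor_bounds by (intro prod_mono) auto
  ultimately show ?thesis
    by simp
qed

lemma prod_qpow_diff_tendsto:
  fixes q :: real
  assumes "\<bar>q\<bar> < 1"
  shows "(\<lambda>n. \<Prod>j<k. q ^ j * q ^ j - q ^ n * q ^ j) \<longlonglongrightarrow> (\<Prod>j<k. q ^ j * q ^ j)"
proof -
  have "(\<lambda>n. \<Prod>j<k. q ^ j * q ^ j - q ^ n * q ^ j) \<longlonglongrightarrow> (\<Prod>j<k. q ^ j * q ^ j - 0 * q ^ j)"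
    using assms by (intro tendsto_intros LIMSEQ_power_zero) auto
  then show ?thesis
    by simp
qed

lemma qhyp_rescaled_terminating_eq:
  fixes q :: real
  assumes "0 < q"
  shows "qhyp (rpowc q (- of_nat n) # map (\<lambda>j. rpowc q (of_real (a j * real n) + b j)) [1..<s])
              (x # map (\<lambda>j. rpowc q (of_real (c j * real n) + d j)) [1..<s])
              q (of_real (q ^ n) * z)
       = (\<Sum>k. of_real (\<Prod>j<k. q ^ j * q ^ j - q ^ n * q ^ j)
               * ((\<Prod>j\<in>{1..<s}. qpoch (rpowc q (of_real (a j * real n) + b j)) q k)
                 / (\<Prod>j\<in>{1..<s}. qpoch (rpowc q (of_real (c j * real n) + d j)) q k))
               * (1 / (qpoch x q k * qpoch (of_real q) q k)) * z ^ k)"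
  unfolding qhyp_def Let_def
proof (rule suminf_cong, goal_cases)
  case (1 k)
  have terminating_factor: "qpoch (rpowc q (- of_nat n)) q k * (-1) ^ k * of_real (q powr real (k choose 2))
          * (of_real q ^ n) ^ k
      = (\<Prod>j<k. of_real q ^ j * of_real q ^ j - of_real q ^ n * of_real q ^ j)"
    using qpoch_rpowc_neg_nat_rescaled[OF assms, of n k] by simp
  show ?case
    by (simp add: map_map o_def power_mult_distrib power_int_of_nat
        flip: terminating_factor prod.distinct_set_conv_list)
      (simp add: mult_ac)
qed

lemma qhyp_0phi1_eq_power_series:
  fixes q :: real
  assumes "0 < q"
  shows "qhyp [] [x] q z
       = (\<Sum>k. of_real (\<Prod>j<k. q ^ j * q ^ j) * (1 / (qpoch x q k * qpoch (of_real q) q k)) * z ^ k)"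
  unfolding qhyp_def Let_def
  by (intro suminf_cong) (simp add: powr_two_choose2[OF assms] power_int_of_nat)

lemma summable_0phi1_majorant:
  fixes q :: real
  assumes q: "0 < q" "q < 1"
  shows "summable (\<lambda>k. (\<Prod>j<k. q ^ j * q ^ j) * norm (1 / (qpoch x q k * qpoch (of_real q) q k)) * R ^ k)"
proof -
  define W where "W k = (\<Prod>j<k. q ^ j * q ^ j) * norm (1 / (qpoch x q k * qpoch (of_real q) q k)) * \<bar>R\<bar> ^ k" for k
  define den where "den k = norm (1 - x * of_real (q ^ k)) * norm (1 - (of_real q :: complex) * of_real (q ^ k))" for k
  have W_nonneg: "W k \<ge> 0" for k
    unfolding W_def using q by (intro mult_nonneg_nonneg prod_nonneg) auto
  have "norm (1 / (qpoch x q (Suc k) * qpoch (of_real q) q (Suc k)))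
        = norm (1 / (qpoch x q k * qpoch (of_real q) q k)) / den k" for k
    unfolding den_def
    by (simp add: qpoch_Suc norm_mult norm_divide divide_divide_eq_left mult_ac del: of_real_power)
  then have W_Suc: "W (Suc k) = W k * ((q ^ k * q ^ k * \<bar>R\<bar>) / den k)" for k
    unfolding W_def by (simp add: field_simps)
  have "(\<lambda>k. q ^ k) \<longlonglongrightarrow> 0"
    using q by (intro LIMSEQ_realpow_zero) auto
  then have "(\<lambda>k. norm x * q ^ k) \<longlonglongrightarrow> 0" "(\<lambda>k. q * q ^ k) \<longlonglongrightarrow> 0"
      "(\<lambda>k. q ^ k * q ^ k * \<bar>R\<bar>) \<longlonglongrightarrow> 0"
    by (auto intro: tendsto_mult_zero tendsto_mult_left_zero tendsto_mult_right_zero)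
  then have "eventually (\<lambda>k. norm x * q ^ k < 1/2 \<and> q * q ^ k < 1/2 \<and> q ^ k * q ^ k * \<bar>R\<bar> < 1/8) sequentially"
    by (intro eventually_conj order_tendstoD(2)) auto
  then obtain N where N: "\<And>k. k \<ge> N \<Longrightarrow>
      norm x * q ^ k < 1/2 \<and> q * q ^ k < 1/2 \<and> q ^ k * q ^ k * \<bar>R\<bar> < 1/8"
    unfolding eventually_sequentially by blast
  have "summable W"
  proof (rule summable_ratio_test[of "1/2" N])
    fix k assume "k \<ge> N"
    have "norm (1 - x * of_real (q ^ k)) \<ge> 1/2" "norm (1 - (of_real q :: complex) * of_real (q ^ k)) \<ge> 1/2"
      using norm_triangle_ineq2[of 1 "x * of_real (q ^ k)"]
        norm_triangle_ineq2[of 1 "of_real q * of_real (q ^ k) :: complex"]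
        N[OF \<open>k \<ge> N\<close>] q by (auto simp: norm_mult norm_power)
    then have "den k \<ge> 1/2 * (1/2)"
      unfolding den_def by (intro mult_mono) auto
    then have "(q ^ k * q ^ k * \<bar>R\<bar>) / den k \<le> 1/2"
      using N[OF \<open>k \<ge> N\<close>] by (simp add: divide_le_eq)
    then have "W (Suc k) \<le> W k * (1/2)"
      unfolding W_Suc by (rule mult_left_mono[OF _ W_nonneg])
    then show "norm (W (Suc k)) \<le> 1/2 * norm (W k)"
      using W_nonneg[of k] W_nonneg[of "Suc k"] by simp
  qed simp
  then show ?thesis
    by (rule summable_comparison_test') (simp add: W_def abs_mult power_abs prod_nonneg)
qed

lemma eventually_norm_prod_qpoch_quotient_le:
  fixes u v :: "'j \<Rightarrow> nat \<Rightarrow> complex"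
  assumes q: "0 < q" "q < 1" and "finite J"
    and u: "\<And>j n. j \<in> J \<Longrightarrow> norm (u j n) \<le> U j"
    and v: "\<And>j. j \<in> J \<Longrightarrow> (\<lambda>n. v j n) \<longlonglongrightarrow> 0"
  shows "eventually (\<lambda>n. \<forall>k. norm ((\<Prod>j\<in>J. qpoch (u j n) q k) / (\<Prod>j\<in>J. qpoch (v j n) q k))
           \<le> (\<Prod>j\<in>J. exp (U j / (1 - q))) * 2 ^ card J) sequentially"
proof -
  have "eventually (\<lambda>n. norm (v j n) < (1 - q) / 2) sequentially" if "j \<in> J" for j
    using order_tendstoD(2)[OF tendsto_norm_zero[OF v[OF that]], of "(1 - q) / 2"] q by simp
  then have "eventually (\<lambda>n. \<forall>j\<in>J. norm (v j n) < (1 - q) / 2) sequentially"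
    using \<open>finite J\<close> by (intro eventually_ball_finite) auto
  then show ?thesis
  proof eventually_elim
    case (elim n)
    show ?case
    proof
      fix k
      have "(1/2 :: real) ^ card J = (\<Prod>j\<in>J. 1/2)"
        by simp
      also have "\<dots> \<le> (\<Prod>j\<in>J. norm (qpoch (v j n) q k))"
      proof (intro prod_mono conjI norm_qpoch_ge)
        fix j assume "j \<in> J"
        then show "norm (v j n) \<le> (1 - q) / 2"
          using elim by (simp add: less_imp_le)
      qed (use q in auto)
      finally have denominator: "(1/2) ^ card J \<le> norm (\<Prod>j\<in>J. qpoch (v j n) q k)"
        by (simp add: prod_norm)
      have "(\<Prod>j\<in>J. norm (qpoch (u j n) q k)) \<le> (\<Prod>j\<in>J. exp (U j / (1 - q)))"
      proof (intro prod_mono conjI)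
        fix j assume "j \<in> J"
        have "norm (qpoch (u j n) q k) \<le> exp (norm (u j n) / (1 - q))"
          using q by (intro norm_qpoch_le) auto
        also have "\<dots> \<le> exp (U j / (1 - q))"
          using u[OF \<open>j \<in> J\<close>] q by (simp add: divide_right_mono)
        finally show "norm (qpoch (u j n) q k) \<le> exp (U j / (1 - q))" .
      qed simp
      then have numerator: "norm (\<Prod>j\<in>J. qpoch (u j n) q k) \<le> (\<Prod>j\<in>J. exp (U j / (1 - q)))"
        by (simp add: prod_norm)
      have "norm ((\<Prod>j\<in>J. qpoch (u j n) q k) / (\<Prod>j\<in>J. qpoch (v j n) q k))
          \<le> (\<Prod>j\<in>J. exp (U j / (1 - q))) / (1/2) ^ card J"
        unfolding norm_divide using numerator denominator order_trans[OF norm_ge_zero numerator]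
        by (intro frac_le) auto
      then show "norm ((\<Prod>j\<in>J. qpoch (u j n) q k) / (\<Prod>j\<in>J. qpoch (v j n) q k))
          \<le> (\<Prod>j\<in>J. exp (U j / (1 - q))) * 2 ^ card J"
        by (simp add: power_one_over)
    qed
  qed
qed

lemma uniform_limit_qhyp_rescaled_terminating:
  fixes q :: real and s :: nat and a c :: "nat \<Rightarrow> real" and b d :: "nat \<Rightarrow> complex"
  assumes q: "0 < q" "q < 1"
    and a: "\<And>j. j \<in> {1..<s} \<Longrightarrow> a j > 0"
    and c: "\<And>j. j \<in> {1..<s} \<Longrightarrow> c j > 0"
    and "compact K"
  shows "uniform_limit K
           (\<lambda>n z. qhyp (rpowc q (- of_nat n) # map (\<lambda>j. rpowc q (of_real (a j * real n) + b j)) [1..<s])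
                        (x # map (\<lambda>j. rpowc q (of_real (c j * real n) + d j)) [1..<s])
                        q (of_real (q ^ n) * z))
           (\<lambda>z. qhyp [] [x] q z) sequentially"
proof -
  define G where "G k = 1 / (qpoch x q k * qpoch (of_real q) q k)" for k
  define P where "P k = (\<Prod>j<k. q ^ j * q ^ j)" for k
  define P_n where "P_n n k = (\<Prod>j<k. q ^ j * q ^ j - q ^ n * q ^ j)" for n k
  define num where "num n k = (\<Prod>j\<in>{1..<s}. qpoch (rpowc q (of_real (a j * real n) + b j)) q k)" for n k
  define den where "den n k = (\<Prod>j\<in>{1..<s}. qpoch (rpowc q (of_real (c j * real n) + d j)) q k)" for n k
  define C where "C = (\<Prod>j\<in>{1..<s}. exp (q powr Re (b j) / (1 - q))) * 2 ^ card {1..<s}"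
  have "uniform_limit K (\<lambda>n z. \<Sum>k. (of_real (P_n n k) * (num n k / den n k) * G k) * z ^ k)
          (\<lambda>z. \<Sum>k. (of_real (P k) * G k) * z ^ k) sequentially"
  proof (rule uniform_limit_power_series_tannery[where M = "\<lambda>k. P k * C * norm (G k)"])
    fix k
    have P_n_lim: "(\<lambda>n. of_real (P_n n k) :: complex) \<longlonglongrightarrow> of_real (P k)"
      unfolding P_n_def P_def using q by (intro tendsto_of_real prod_qpow_diff_tendsto) simp
    have num_lim: "(\<lambda>n. num n k) \<longlonglongrightarrow> (\<Prod>j\<in>{1..<s}. 1)"
      unfolding num_def by (intro tendsto_prod qpoch_tendsto_one rpowc_linear_tendsto_zero[OF q] a)
    have den_lim: "(\<lambda>n. den n k) \<longlonglongrightarrow> (\<Prod>j\<in>{1..<s}. 1)"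
      unfolding den_def by (intro tendsto_prod qpoch_tendsto_one rpowc_linear_tendsto_zero[OF q] c)
    have "(\<lambda>n. of_real (P_n n k) * (num n k / den n k) * G k)
        \<longlonglongrightarrow> of_real (P k) * ((\<Prod>j\<in>{1..<s}. 1) / (\<Prod>j\<in>{1..<s}. 1)) * G k"
      by (intro tendsto_mult[OF tendsto_mult[OF P_n_lim tendsto_divide[OF num_lim den_lim]] tendsto_const])
        simp
    then show "(\<lambda>n. of_real (P_n n k) * (num n k / den n k) * G k) \<longlonglongrightarrow> of_real (P k) * G k"
      by simp
  next
    have "eventually (\<lambda>n. \<forall>k. norm (num n k / den n k) \<le> C) sequentially"
      unfolding num_def den_def C_def using q a c
      by (intro eventually_norm_prod_qpoch_quotient_le norm_rpowc_linear_le rpowc_linear_tendsto_zero) auto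
    then show "eventually (\<lambda>n. \<forall>k. norm (of_real (P_n n k) * (num n k / den n k) * G k)
        \<le> P k * C * norm (G k)) sequentially"
    proof eventually_elim
      case (elim n)
      show ?case
      proof
        fix k
        have "norm (of_real (P_n n k) :: complex) \<le> P k"
          unfolding P_n_def P_def norm_of_real using abs_prod_qpow_diff_le[OF q] .
        then show "norm (of_real (P_n n k) * (num n k / den n k) * G k) \<le> P k * C * norm (G k)"
          unfolding norm_mult using elim
          by (intro mult_right_mono mult_mono) (auto simp: P_def intro!: prod_nonneg)
      qed
    qed
  next
    show "summable (\<lambda>k. P k * C * norm (G k) * R ^ k)" for R
      using summable_mult[OF summable_0phi1_majorant[OF q, of x R], of C]
      by (simp add: P_def G_def mult_ac)
  qed fact
  then show ?thesis
    unfolding qhyp_rescaled_terminating_eq[OF q(1)] qhyp_0phi1_eq_power_series[OF q(1)]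
    by (simp only: G_def P_def P_n_def num_def den_def)
qed

theorem proposition5:
  fixes q \<alpha> :: real and s :: nat
    and a c :: "nat \<Rightarrow> real" and b d :: "nat \<Rightarrow> complex"
  assumes q: "0 < q" "q < 1"
    and s: "s \<ge> 1"
    and \<alpha>: "\<alpha> \<notin> \<int>\<^sub>\<le>\<^sub>0"
    and a: "\<And>j. j \<in> {1..<s} \<Longrightarrow> a j > 0"
    and c: "\<And>j. j \<in> {1..<s} \<Longrightarrow> c j > 0"
    and ab: "\<And>j n. j \<in> {1..<s} \<Longrightarrow> n \<ge> 1 \<Longrightarrow> a j * real n + Re (b j) \<notin> \<int>\<^sub>\<le>\<^sub>0"
    and cd: "\<And>j n. j \<in> {1..<s} \<Longrightarrow> n \<ge> 1 \<Longrightarrow> c j * real n + Re (d j) \<notin> \<int>\<^sub>\<le>\<^sub>0"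
  shows "(\<forall>K. compact K \<longrightarrow>
           uniform_limit K
             (\<lambda>n z. qhyp (rpowc q (- of_nat n) #
                             map (\<lambda>j. rpowc q (of_real (a j * real n) + b j)) [1..<s])
                          (rpowc q (of_real \<alpha>) #
                             map (\<lambda>j. rpowc q (of_real (c j * real n) + d j)) [1..<s])
                          q (of_real (q ^ n) * z))
             (\<lambda>z. qhyp [] [rpowc q (of_real \<alpha>)] q z) sequentially)
       \<and> (\<forall>z::complex. z \<noteq> 0 \<longrightarrow>
           qhyp [] [rpowc q (of_real \<alpha>)] q z =
             ((- z) / (of_real ((q - 1)\<^sup>2) * rpowc q (of_real \<alpha>))) powr (of_real ((1 - \<alpha>) / 2))
             * qGamma q (of_real \<alpha>)
             * qBessel2 q (of_real (\<alpha> - 1)) (2 * csqrt (- z / rpowc q (of_real \<alpha>))))"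
  by (intro conjI allI impI uniform_limit_qhyp_rescaled_terminating[OF q a c]
      qhyp_0phi1_eq_qBessel2[OF q \<alpha>])

end
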